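(* In the contention game with $k=2$ channels and $n\ge2$ players, if all players use the protocol $f^2$ (in every slot, regardless of history, a pending player transmits on each of the two channels with probability $1/2$ and never stays idle), then the expected latency of any player is $2^n/n$.
   Context: Contention game: $n$ players, channels $K=\{1,\dots,k\}$, slots $t=1,2,\dots$; each player has one packet and is initially pending. In each slot a pending player chooses an action in $\{0,1,\dots,k\}$ ($0$ = idle, $a$ = transmit on channel $a$). A lone transmitter on a channel succeeds and leaves the game; two or more transmitters on the same channel collide and remain pending. The latency of a player is the slot in which she transmits successfully. *)

theory Defs
  imports "HOL-Probability.Probability"
begin

text \<open>Randomness of protocol f^2 with k = 2 channels: an outcome w assigns to every
  slot index t (slot t+1) and player i the channel w (t, i) in {1,2}, chosen uniformly and
  independently of everything else (history-independent; only the choices of pending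
  players matter).\<close>

definition channel_space :: "(nat \<times> nat \<Rightarrow> nat) measure" where
  "channel_space = PiM UNIV (\<lambda>_. measure_pmf (pmf_of_set {1, 2::nat}))"

definition succeeders :: "(nat \<times> nat \<Rightarrow> nat) \<Rightarrow> nat \<Rightarrow> nat set \<Rightarrow> nat set" where
  "succeeders w t P = {i \<in> P. \<forall>j \<in> P. j \<noteq> i \<longrightarrow> w (t, j) \<noteq> w (t, i)}"

fun pending :: "(nat \<times> nat \<Rightarrow> nat) \<Rightarrow> nat \<Rightarrow> nat \<Rightarrow> nat set" where
  "pending w n 0 = {0..<n}"
| "pending w n (Suc t) = pending w n t - succeeders w t (pending w n t)"

definition latency :: "nat \<Rightarrow> nat \<Rightarrow> (nat \<times> nat \<Rightarrow> nat) \<Rightarrow> ennreal" where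
  "latency n i w = (if \<exists>t. i \<notin> pending w n t
     then of_nat (LEAST t. i \<notin> pending w n t) else \<infinity>)"

end

theory Submission
  imports Defs
begin

text \<open>With two channels, two players that succeed in the same slot occupy both channels, so no
  third player can be pending.  Hence among \<open>m \<ge> 3\<close> pending players at most one succeeds: a
  given one with probability \<open>2 / 2^m\<close> (all others on the other channel), nobody with probability
  \<open>1 - 2m / 2^m\<close>; of two pending players both or none succeed, each with probability 1/2.  The
  expected latency \<open>E m\<close> of a pending player among \<open>m\<close> thus satisfies \<open>E 1 = 1\<close>,
  \<open>E 2 = 1 + E 2 / 2\<close> and \<open>E m = 1 + (1 - 2m / 2^m) E m + (m - 1) (2 / 2^m) E (m - 1)\<close>, whose
  solution is \<open>E m = 2^m / m\<close> for \<open>m \<ge> 2\<close>.  As \<open>E m\<close> is not known to be finite in advance,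
  the recursion is run on the expected number of the first \<open>T\<close> slots in which the player is
  pending, computed by splitting the first slot off the product measure; these values increase
  in \<open>T\<close>, are bounded by the solution, and their limit satisfies the recursion, whose finite
  solution is unique.\<close>

section \<open>Splitting off the first slot of a product measure\<close>

definition cons_slot :: "('i \<Rightarrow> 'a) \<Rightarrow> (nat \<times> 'i \<Rightarrow> 'a) \<Rightarrow> nat \<times> 'i \<Rightarrow> 'a" where
  "cons_slot x w = (\<lambda>(t, j). case t of 0 \<Rightarrow> x j | Suc t \<Rightarrow> w (t, j))"

lemma cons_slot_simps [simp]:
  "cons_slot x w (0, j) = x j"
  "cons_slot x w (Suc t, j) = w (t, j)"
  by (simp_all add: cons_slot_def)

lemma measurable_cons_slot [measurable]:
  "case_prod cons_slot \<in> (\<Pi>\<^sub>M j\<in>UNIV. M) \<Otimes>\<^sub>M (\<Pi>\<^sub>M p\<in>UNIV. M) \<rightarrow>\<^sub>M (\<Pi>\<^sub>M p\<in>UNIV. M)"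
proof (rule measurable_PiM_single')
  fix p :: "nat \<times> 'a"
  show "(\<lambda>xw. case_prod cons_slot xw p) \<in> (\<Pi>\<^sub>M j\<in>UNIV. M) \<Otimes>\<^sub>M (\<Pi>\<^sub>M p\<in>UNIV. M) \<rightarrow>\<^sub>M M"
    by (cases p; cases "fst p") (simp_all add: split_beta')
qed (auto simp: space_PiM space_pair_measure PiE_iff cons_slot_def split: nat.split)

lemma prod_emb_PiE_space:
  "prod_emb I M K (Pi\<^sub>E K F) = {x \<in> space (Pi\<^sub>M I M). \<forall>k\<in>K. x k \<in> F k}" if "K \<subseteq> I"
  using that by (auto simp: prod_emb_def space_PiM PiE_iff extensional_def)

lemma Pair_0_apfst_Suc_split: "A = Pair 0 ` (Pair 0 -` A) \<union> apfst Suc ` (apfst Suc -` A)"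
proof (intro set_eqI iffI)
  fix p assume "p \<in> A"
  then show "p \<in> Pair 0 ` (Pair 0 -` A) \<union> apfst Suc ` (apfst Suc -` A)"
    by (cases p; cases "fst p") (auto simp: image_iff)
qed auto

lemma distr_cons_slot_PiM:
  assumes "prob_space M"
  shows "distr ((\<Pi>\<^sub>M j\<in>UNIV. M) \<Otimes>\<^sub>M (\<Pi>\<^sub>M p\<in>UNIV. M)) (\<Pi>\<^sub>M p\<in>UNIV. M) (case_prod cons_slot)
    = (\<Pi>\<^sub>M p\<in>(UNIV :: (nat \<times> 'i) set). M)" (is "distr (?S \<Otimes>\<^sub>M ?C) _ ?f = _")
proof -
  interpret C: product_prob_space "\<lambda>_. M" "UNIV :: (nat \<times> 'i) set"
    using assms by (intro product_prob_spaceI)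
  interpret S: product_prob_space "\<lambda>_. M" "UNIV :: 'i set"
    using assms by (intro product_prob_spaceI)
  show ?thesis
  proof (rule C.PiM_eq)
    fix J :: "(nat \<times> 'i) set" and E assume J: "finite J" and E: "\<And>p. p \<in> J \<Longrightarrow> E p \<in> sets M"
    let ?X = "prod_emb UNIV (\<lambda>_. M) J (\<Pi>\<^sub>E p\<in>J. E p)"
    define J0 where "J0 = Pair 0 -` J"
    define J1 where "J1 = apfst Suc -` J"
    have fin: "finite J0" "finite J1"
      using J by (auto simp: J0_def J1_def intro!: finite_vimageI inj_onI)
    let ?A = "prod_emb UNIV (\<lambda>_. M) J0 (\<Pi>\<^sub>E j\<in>J0. E (0, j))"
    let ?B = "prod_emb UNIV (\<lambda>_. M) J1 (\<Pi>\<^sub>E p\<in>J1. E (apfst Suc p))"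
    have J_split: "J = Pair 0 ` J0 \<union> apfst Suc ` J1"
      unfolding J0_def J1_def by (rule Pair_0_apfst_Suc_split)
    have ball_J: "(\<forall>p\<in>J. Q p) \<longleftrightarrow> (\<forall>j\<in>J0. Q (0, j)) \<and> (\<forall>p\<in>J1. Q (apfst Suc p))" for Q
      by (subst J_split) blast
    have "?f -` ?X \<inter> space (?S \<Otimes>\<^sub>M ?C) = ?A \<times> ?B"
      by (auto simp: prod_emb_PiE_space space_pair_measure space_PiM PiE_iff ball_J
          cons_slot_def split: nat.split)
    then have "emeasure (distr (?S \<Otimes>\<^sub>M ?C) ?C ?f) ?X = emeasure (?S \<Otimes>\<^sub>M ?C) (?A \<times> ?B)"
      using J E by (subst emeasure_distr) (auto intro!: sets_PiM_I)
    also have "\<dots> = emeasure ?S ?A * emeasure ?C ?B"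
      using fin E by (intro C.emeasure_pair_measure_Times) (auto intro!: sets_PiM_I simp: J0_def J1_def)
    also have "emeasure ?S ?A = (\<Prod>j\<in>J0. emeasure M (E (0, j)))"
      using fin E by (intro S.emeasure_PiM_emb) (auto simp: J0_def)
    also have "emeasure ?C ?B = (\<Prod>p\<in>J1. emeasure M (E (apfst Suc p)))"
      using fin E by (intro C.emeasure_PiM_emb) (auto simp: J1_def)
    also have "(\<Prod>j\<in>J0. emeasure M (E (0, j))) * (\<Prod>p\<in>J1. emeasure M (E (apfst Suc p)))
        = (\<Prod>p\<in>Pair 0 ` J0. emeasure M (E p)) * (\<Prod>p\<in>apfst Suc ` J1. emeasure M (E p))"
      by (subst (1 2) prod.reindex) (auto simp: inj_on_def)
    also have "\<dots> = (\<Prod>p\<in>J. emeasure M (E p))"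
      using fin by (subst J_split, subst prod.union_disjoint) auto
    finally show "emeasure (distr (?S \<Otimes>\<^sub>M ?C) ?C ?f) ?X = (\<Prod>p\<in>J. emeasure M (E p))" .
  qed simp
qed

lemma nn_integral_PiM_cons_slot:
  assumes "prob_space M" and f: "f \<in> borel_measurable (\<Pi>\<^sub>M p\<in>(UNIV :: (nat \<times> 'i) set). M)"
  shows "(\<integral>\<^sup>+ w. f w \<partial>(\<Pi>\<^sub>M p\<in>UNIV. M))
    = (\<integral>\<^sup>+ x. (\<integral>\<^sup>+ w. f (cons_slot x w) \<partial>(\<Pi>\<^sub>M p\<in>UNIV. M)) \<partial>(\<Pi>\<^sub>M j\<in>(UNIV :: 'i set). M))"
proof -
  interpret C: product_prob_space "\<lambda>_. M" "UNIV :: (nat \<times> 'i) set"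
    using assms(1) by (intro product_prob_spaceI)
  have "(\<integral>\<^sup>+ w. f w \<partial>(\<Pi>\<^sub>M p\<in>UNIV. M))
      = (\<integral>\<^sup>+ xw. f (case_prod cons_slot xw) \<partial>((\<Pi>\<^sub>M j\<in>(UNIV :: 'i set). M) \<Otimes>\<^sub>M (\<Pi>\<^sub>M p\<in>UNIV. M)))"
    using f by (subst (1) distr_cons_slot_PiM[OF assms(1), symmetric]) (simp add: nn_integral_distr)
  also have "\<dots> = (\<integral>\<^sup>+ x. (\<integral>\<^sup>+ w. f (cons_slot x w) \<partial>(\<Pi>\<^sub>M p\<in>UNIV. M)) \<partial>(\<Pi>\<^sub>M j\<in>(UNIV :: 'i set). M))"
    using f by (subst C.P.nn_integral_fst[symmetric]) simp_all
  finally show ?thesis .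
qed

lemma measurable_count_space_Pow:
  assumes "finite Q" and "\<And>w. w \<in> space M \<Longrightarrow> f w \<subseteq> Q"
    and "\<And>i. i \<in> Q \<Longrightarrow> Measurable.pred M (\<lambda>w. i \<in> f w)"
  shows "f \<in> M \<rightarrow>\<^sub>M count_space (Pow Q)"
proof -
  have "f -` {R} \<inter> space M \<in> sets M" if "R \<subseteq> Q" for R
  proof -
    have "f -` {R} \<inter> space M = {w \<in> space M. \<forall>i\<in>Q. i \<in> f w \<longleftrightarrow> i \<in> R}"
      using assms(2) that by blast
    also have "\<dots> \<in> sets M"
      using assms by measurable
    finally show ?thesis .
  qed
  then show ?thesis
    using assms(1,2) by (auto simp: measurable_count_space_eq_countable countable_finite)
qed

section \<open>A single slot\<close>

definition slot_space :: "(nat \<Rightarrow> nat) measure" where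
  "slot_space = (\<Pi>\<^sub>M j\<in>UNIV. measure_pmf (pmf_of_set {1, 2::nat}))"

lemma prob_space_slot_space: "prob_space slot_space"
  unfolding slot_space_def by (simp add: prob_space_PiM prob_space_measure_pmf)

lemma space_slot_space [simp]: "space slot_space = UNIV"
  by (simp add: slot_space_def space_PiM)

lemma emeasure_slot_space_UNIV [simp]: "emeasure slot_space UNIV = 1"
  using prob_space.emeasure_space_1[OF prob_space_slot_space] by simp

lemma AE_slot_values: "finite P \<Longrightarrow> AE x in slot_space. \<forall>k\<in>P. x k \<in> {1, 2}"
  unfolding slot_space_def
  by (intro AE_finite_allI AE_PiM_component) (simp_all add: prob_space_measure_pmf AE_measure_pmf_iff)

lemma sets_slot_colouring [measurable]:
  assumes "finite P"
  shows "{x. \<forall>k\<in>P. x k = c k} \<in> sets slot_space"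
proof -
  have "{x \<in> space slot_space. \<forall>k\<in>P. x k = c k} \<in> sets slot_space"
    using assms unfolding slot_space_def by measurable
  then show ?thesis
    by simp
qed

lemma emeasure_slot_colouring:
  assumes "finite P" and "\<forall>k\<in>P. c k \<in> {1, 2}"
  shows "emeasure slot_space {x. \<forall>k\<in>P. x k = c k} = ennreal ((1 / 2) ^ card P)"
proof -
  interpret product_prob_space "\<lambda>_. measure_pmf (pmf_of_set {1, 2::nat})" "UNIV :: nat set"
    by (intro product_prob_spaceI prob_space_measure_pmf)
  have "{x. \<forall>k\<in>P. x k = c k} = {x \<in> space slot_space. \<forall>k\<in>P. x k \<in> {c k}}"
    by (simp add: slot_space_def space_PiM)
  also have "emeasure slot_space \<dots> = (\<Prod>k\<in>P. emeasure (measure_pmf (pmf_of_set {1, 2})) {c k})"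
    unfolding slot_space_def using assms(1) by (intro emeasure_PiM_Collect) auto
  also have "\<dots> = (\<Prod>k\<in>P. ennreal (1 / 2))"
    using assms(2) by (intro prod.cong) (auto simp: emeasure_pmf_single)
  also have "\<dots> = ennreal ((1 / 2) ^ card P)"
    by (simp only: prod_constant) (rule ennreal_power, simp)
  finally show ?thesis .
qed

definition slot_succeeders :: "(nat \<Rightarrow> nat) \<Rightarrow> nat set \<Rightarrow> nat set" where
  "slot_succeeders x P = {i \<in> P. \<forall>j \<in> P. j \<noteq> i \<longrightarrow> x j \<noteq> x i}"

lemma measurable_slot_succeeders:
  assumes "finite P"
  shows "(\<lambda>x. slot_succeeders x P) \<in> slot_space \<rightarrow>\<^sub>M count_space (Pow P)"
proof (rule measurable_count_space_Pow)
  show "\<And>i. i \<in> P \<Longrightarrow> Measurable.pred slot_space (\<lambda>x. i \<in> slot_succeeders x P)"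
    using assms unfolding slot_space_def slot_succeeders_def by measurable
qed (use assms in \<open>auto simp: slot_succeeders_def\<close>)

lemma sets_slot_succeeders [measurable]:
  assumes "finite P"
  shows "{x. F (slot_succeeders x P)} \<in> sets slot_space"
proof -
  have "(\<lambda>x. slot_succeeders x P) -` ({Q. F Q} \<inter> Pow P) \<inter> space slot_space \<in> sets slot_space"
    by (rule measurable_sets[OF measurable_slot_succeeders[OF assms]]) simp
  moreover have "(\<lambda>x. slot_succeeders x P) -` ({Q. F Q} \<inter> Pow P) \<inter> space slot_space
      = {x. F (slot_succeeders x P)}"
    by (auto simp: slot_succeeders_def)
  ultimately show ?thesis
    by simp
qed

lemma two_succeeders_cover:
  assumes "\<forall>k\<in>P. x k \<in> {1, 2}" and "j \<in> slot_succeeders x P" "k \<in> slot_succeeders x P" "j \<noteq> k"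
  shows "P = {j, k}"
proof -
  have jk: "j \<in> P" "k \<in> P" "x j \<noteq> x k"
    using assms(2-4) by (auto simp: slot_succeeders_def)
  have "l \<in> {j, k}" if "l \<in> P" for l
  proof (rule ccontr)
    assume "l \<notin> {j, k}"
    then have "x l \<noteq> x j" "x l \<noteq> x k"
      using assms(2,3) that by (auto simp: slot_succeeders_def)
    moreover have "x j \<in> {1, 2}" "x k \<in> {1, 2}" "x l \<in> {1, 2}"
      using assms(1) jk that by auto
    ultimately show False
      using jk(3) by auto
  qed
  then show ?thesis
    using jk by blast
qed

lemma slot_succeeders_at_most_one:
  assumes "card P \<ge> 3" and "\<forall>k\<in>P. x k \<in> {1, 2}"
  shows "slot_succeeders x P = {} \<or> (\<exists>j\<in>P. slot_succeeders x P = {j})"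
proof (cases "slot_succeeders x P = {}")
  case False
  then obtain j where j: "j \<in> slot_succeeders x P"
    by blast
  have "k = j" if "k \<in> slot_succeeders x P" for k
  proof (rule ccontr)
    assume "k \<noteq> j"
    then have "P = {j, k}"
      using two_succeeders_cover[OF assms(2) j that] by simp
    then show False
      using assms(1) \<open>k \<noteq> j\<close> by simp
  qed
  then have "slot_succeeders x P = {j}"
    using j by blast
  then show ?thesis
    using j by (auto simp: slot_succeeders_def)
qed simp

lemma slot_succeeders_pair:
  "j \<noteq> k \<Longrightarrow> slot_succeeders x {j, k} = (if x j = x k then {} else {j, k})"
  by (auto simp: slot_succeeders_def)

lemma slot_succeeds_iff_colouring:
  assumes "\<forall>k\<in>P. x k \<in> {1, 2}" and "j \<in> P"
  shows "j \<in> slot_succeeders x P \<longleftrightarrow> (\<exists>c\<in>{1, 2}. \<forall>k\<in>P. x k = (if k = j then c else 3 - c))"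
proof
  assume "j \<in> slot_succeeders x P"
  have "x k = 3 - x j" if "k \<in> P" "k \<noteq> j" for k
  proof -
    have "x k \<noteq> x j"
      using \<open>j \<in> slot_succeeders x P\<close> that by (auto simp: slot_succeeders_def)
    moreover have "x k \<in> {1, 2}" "x j \<in> {1, 2}"
      using assms that by auto
    ultimately show ?thesis
      by auto
  qed
  then have "\<forall>k\<in>P. x k = (if k = j then x j else 3 - x j)"
    by simp
  then show "\<exists>c\<in>{1, 2}. \<forall>k\<in>P. x k = (if k = j then c else 3 - c)"
    using assms by blast
next
  assume "\<exists>c\<in>{1, 2}. \<forall>k\<in>P. x k = (if k = j then c else 3 - c)"
  then show "j \<in> slot_succeeders x P"
    using assms(2) by (fastforce simp: slot_succeeders_def)
qed

lemma emeasure_slot_succeeds: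
  assumes "finite P" "j \<in> P"
  shows "emeasure slot_space {x. j \<in> slot_succeeders x P} = ennreal (2 / 2 ^ card P)"
proof -
  let ?A = "\<lambda>c. {x. \<forall>k\<in>P. x k = (if k = j then c else 3 - c)}"
  have "emeasure slot_space {x. j \<in> slot_succeeders x P} = emeasure slot_space (?A 1 \<union> ?A 2)"
  proof (rule emeasure_eq_AE)
    show "AE x in slot_space. x \<in> {x. j \<in> slot_succeeders x P} \<longleftrightarrow> x \<in> ?A 1 \<union> ?A 2"
      using AE_slot_values[OF assms(1)]
      by eventually_elim (simp add: slot_succeeds_iff_colouring[OF _ assms(2)])
  qed (use assms(1) in \<open>simp_all add: sets_slot_succeeders sets.Un sets_slot_colouring\<close>)
  also have "\<dots> = emeasure slot_space (?A 1) + emeasure slot_space (?A 2)"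
    using assms by (intro plus_emeasure[symmetric] sets_slot_colouring) auto
  also have "\<dots> = ennreal (2 / 2 ^ card P)"
    using assms(1) by (simp add: emeasure_slot_colouring power_one_over flip: ennreal_plus)
  finally show ?thesis .
qed

lemma emeasure_slot_no_success_pair:
  assumes "j \<noteq> k"
  shows "emeasure slot_space {x. slot_succeeders x {j, k} = {}} = ennreal (1 / 2)"
proof -
  have "{x. slot_succeeders x {j, k} = {}} = space slot_space - {x. j \<in> slot_succeeders x {j, k}}"
    using assms by (auto simp: slot_succeeders_pair)
  also have "emeasure slot_space \<dots> = ennreal 1 - ennreal (2 / 2 ^ 2)"
    using assms by (subst emeasure_compl) (simp_all add: emeasure_slot_succeeds)
  also have "\<dots> = ennreal (1 / 2)"
    by (subst ennreal_minus) simp_all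
  finally show ?thesis .
qed

lemma emeasure_slot_no_success:
  assumes "card P \<ge> 3"
  shows "emeasure slot_space {x. slot_succeeders x P = {}} = ennreal (1 - 2 * card P / 2 ^ card P)"
proof -
  have P: "finite P"
    using assms by (metis card.infinite not_numeral_le_zero)
  let ?E = "{x. slot_succeeders x P = {}}" and ?F = "\<lambda>j. {x. j \<in> slot_succeeders x P}"
  have "AE x in slot_space. indicator ?E x + (\<Sum>j\<in>P. indicator (?F j) x) = (1 :: ennreal)"
    using AE_slot_values[OF P]
  proof eventually_elim
    case (elim x)
    from slot_succeeders_at_most_one[OF assms elim] show ?case
      by (auto simp: indicator_def P)
  qed
  then have "(\<integral>\<^sup>+ x. indicator ?E x + (\<Sum>j\<in>P. indicator (?F j) x) \<partial>slot_space) = (\<integral>\<^sup>+ x. 1 \<partial>slot_space)"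
    by (rule nn_integral_cong_AE)
  then have "1 = emeasure slot_space ?E + (\<Sum>j\<in>P. emeasure slot_space (?F j))"
    using P by (simp add: nn_integral_add nn_integral_sum sets_slot_succeeders)
  also have "(\<Sum>j\<in>P. emeasure slot_space (?F j)) = ennreal (2 * card P / 2 ^ card P)"
    using P by (simp add: emeasure_slot_succeeds ennreal_of_nat_eq_real_of_nat flip: ennreal_mult)
  finally have "emeasure slot_space ?E = ennreal 1 - ennreal (2 * card P / 2 ^ card P)"
    by (metis ennreal_1 ennreal_add_diff_cancel_right ennreal_neq_top)
  then show ?thesis
    by (subst (asm) ennreal_minus) simp_all
qed

lemma slot_transition_integrand:
  fixes \<psi> :: "nat \<Rightarrow> ennreal"
  assumes "card P \<ge> 3" "i \<in> P" and "\<forall>k\<in>P. x k \<in> {1, 2}"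
  shows "(if i \<in> P - slot_succeeders x P then \<psi> (card (P - slot_succeeders x P)) else 0)
    = \<psi> (card P) * indicator {x. slot_succeeders x P = {}} x
      + (\<Sum>j\<in>P - {i}. \<psi> (card P - 1) * indicator {x. j \<in> slot_succeeders x P} x)"
proof -
  have P: "finite P"
    using assms(1) by (metis card.infinite not_numeral_le_zero)
  from slot_succeeders_at_most_one[OF assms(1,3)]
  consider "slot_succeeders x P = {}" | j where "j \<in> P" "slot_succeeders x P = {j}"
    by blast
  then show ?thesis
  proof cases
    case (2 j)
    then have "(\<Sum>l\<in>P - {i}. \<psi> (card P - 1) * indicator {x. l \<in> slot_succeeders x P} x)
        = (if j = i then 0 else \<psi> (card P - 1))"
      using P by (simp add: indicator_def if_distrib[of "(*) _"] sum.delta)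
    then show ?thesis
      using 2 P assms(2) by (simp add: card_Diff_singleton)
  qed (simp add: assms(2))
qed

lemma nn_integral_slot_transition_many:
  fixes \<psi> :: "nat \<Rightarrow> ennreal"
  assumes "card P \<ge> 3" "i \<in> P"
  shows "(\<integral>\<^sup>+ x. (if i \<in> P - slot_succeeders x P then \<psi> (card (P - slot_succeeders x P)) else 0) \<partial>slot_space)
    = ennreal (1 - 2 * card P / 2 ^ card P) * \<psi> (card P)
      + ennreal (real (card P - 1) * 2 / 2 ^ card P) * \<psi> (card P - 1)"
proof -
  let ?S = "\<lambda>x. slot_succeeders x P" and ?m = "card P"
  have P: "finite P"
    using assms(1) by (metis card.infinite not_numeral_le_zero)
  have events [measurable]: "{x. ?S x = {}} \<in> sets slot_space" "\<And>j. {x. j \<in> ?S x} \<in> sets slot_space"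
    using P by (simp_all add: sets_slot_succeeders)
  have "(\<integral>\<^sup>+ x. (if i \<in> P - ?S x then \<psi> (card (P - ?S x)) else 0) \<partial>slot_space)
      = (\<integral>\<^sup>+ x. \<psi> ?m * indicator {x. ?S x = {}} x
        + (\<Sum>j\<in>P - {i}. \<psi> (?m - 1) * indicator {x. j \<in> ?S x} x) \<partial>slot_space)"
    using AE_slot_values[OF P]
    by (intro nn_integral_cong_AE) (erule eventually_mono, rule slot_transition_integrand[OF assms])
  also have "\<dots> = \<psi> ?m * emeasure slot_space {x. ?S x = {}}
      + (\<Sum>j\<in>P - {i}. \<psi> (?m - 1) * emeasure slot_space {x. j \<in> ?S x})"
    by (simp add: nn_integral_add nn_integral_sum nn_integral_cmult_indicator events)
  also have "(\<Sum>j\<in>P - {i}. \<psi> (?m - 1) * emeasure slot_space {x. j \<in> ?S x})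
      = of_nat (?m - 1) * ennreal (2 / 2 ^ ?m) * \<psi> (?m - 1)"
    using P assms(2) by (simp add: emeasure_slot_succeeds card_Diff_singleton mult_ac)
  also have "of_nat (?m - 1) * ennreal (2 / 2 ^ ?m) = ennreal (real (?m - 1) * 2 / 2 ^ ?m)"
    by (simp add: ennreal_of_nat_eq_real_of_nat flip: ennreal_mult)
  finally show ?thesis
    using assms(1) by (simp add: emeasure_slot_no_success mult.commute)
qed

definition prob_no_success :: "nat \<Rightarrow> real" where
  "prob_no_success m = (if m = 2 then 1 / 2 else 1 - 2 * m / 2 ^ m)"

definition prob_other_success :: "nat \<Rightarrow> real" where
  "prob_other_success m = (if m = 2 then 0 else real (m - 1) * 2 / 2 ^ m)"

lemma nn_integral_slot_transition:
  fixes \<psi> :: "nat \<Rightarrow> ennreal"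
  assumes P: "finite P" "i \<in> P"
  shows "(\<integral>\<^sup>+ x. (if i \<in> P - slot_succeeders x P then \<psi> (card (P - slot_succeeders x P)) else 0) \<partial>slot_space)
    = ennreal (prob_no_success (card P)) * \<psi> (card P)
      + ennreal (prob_other_success (card P)) * \<psi> (card P - 1)"
    (is "integral\<^sup>N slot_space ?f = _")
proof -
  let ?S = "\<lambda>x. slot_succeeders x P"
  have "card P \<noteq> 0"
    using P by auto
  then consider "card P = 1" | "card P = 2" | "card P \<ge> 3"
    by linarith
  then show ?thesis
  proof cases
    case 1
    then have "P = {i}"
      using P by (auto simp: card_1_singleton_iff)
    then show ?thesis
      by (simp add: slot_succeeders_def prob_no_success_def prob_other_success_def)
  next
    case 2
    then obtain k where "P - {i} = {k}"
      using P by (metis card_1_singleton_iff card_Diff_singleton diff_Suc_1 numeral_2_eq_2)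
    then have P_eq: "P = {i, k}" and "i \<noteq> k"
      using P(2) by auto
    then have "?f x = \<psi> (card P) * indicator {x. ?S x = {}} x" for x
      by (simp add: slot_succeeders_pair indicator_def)
    then have "integral\<^sup>N slot_space ?f = \<psi> (card P) * emeasure slot_space {x. ?S x = {}}"
      using P(1) by (simp add: nn_integral_cmult_indicator sets_slot_succeeders)
    then show ?thesis
      using 2 P_eq \<open>i \<noteq> k\<close>
      by (simp add: emeasure_slot_no_success_pair prob_no_success_def prob_other_success_def mult.commute)
  next
    case 3
    then show ?thesis
      using nn_integral_slot_transition_many[OF 3 P(2)]
      by (simp add: prob_no_success_def prob_other_success_def)
  qed
qed

lemma prob_space_channel_space: "prob_space channel_space"
  unfolding channel_space_def by (simp add: prob_space_PiM prob_space_measure_pmf)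

lemma succeeders_cons_slot:
  "succeeders (cons_slot x w) 0 P = slot_succeeders x P"
  "succeeders (cons_slot x w) (Suc t) P = succeeders w t P"
  by (simp_all add: succeeders_def slot_succeeders_def)

fun pending_from :: "(nat \<times> nat \<Rightarrow> nat) \<Rightarrow> nat set \<Rightarrow> nat \<Rightarrow> nat set" where
  "pending_from w P 0 = P"
| "pending_from w P (Suc t) = pending_from w P t - succeeders w t (pending_from w P t)"

lemma pending_eq_pending_from: "pending w n t = pending_from w {0..<n} t"
  by (induction t) simp_all

lemma pending_from_cons_slot:
  "pending_from (cons_slot x w) P (Suc t) = pending_from w (P - slot_succeeders x P) t"
  by (induction t) (simp_all add: succeeders_cons_slot)

lemma pending_from_antimono: "t \<le> t' \<Longrightarrow> pending_from w P t' \<subseteq> pending_from w P t"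
  by (induction t' rule: dec_induct) auto

lemma measurable_pending_from [measurable]:
  assumes "finite P"
  shows "(\<lambda>w. pending_from w P t) \<in> channel_space \<rightarrow>\<^sub>M count_space (Pow P)"
proof (induction t)
  case 0
  then show ?case by simp
next
  case (Suc t)
  have "(\<lambda>w. Q - succeeders w t Q) \<in> channel_space \<rightarrow>\<^sub>M count_space (Pow P)" if "Q \<in> Pow P" for Q
  proof (rule measurable_count_space_Pow)
    show "\<And>i. i \<in> P \<Longrightarrow> Measurable.pred channel_space (\<lambda>w. i \<in> Q - succeeders w t Q)"
      using that assms finite_subset[of Q P] unfolding channel_space_def succeeders_def by measurable
  qed (use that assms in auto)
  then show ?case
    using Suc assms by (auto intro: measurable_compose_countable'[where I = "Pow P"] simp: countable_finite)
qed

lemma pred_pending_from [measurable]: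
  "finite P \<Longrightarrow> Measurable.pred channel_space (\<lambda>w. i \<in> pending_from w P t)"
  by (rule measurable_compose[OF measurable_pending_from]) simp_all

definition expected_pending_slots :: "nat \<Rightarrow> nat \<Rightarrow> nat set \<Rightarrow> ennreal" where
  "expected_pending_slots i T P = (\<integral>\<^sup>+ w. (\<Sum>t<T. indicator {w. i \<in> pending_from w P t} w) \<partial>channel_space)"

lemma expected_pending_slots_Suc:
  assumes "finite P"
  shows "expected_pending_slots i (Suc T) P
    = indicator P i + (\<integral>\<^sup>+ x. expected_pending_slots i T (P - slot_succeeders x P) \<partial>slot_space)"
proof -
  let ?f = "\<lambda>w. \<Sum>t<T. indicator {w. i \<in> pending_from w P (Suc t)} w :: ennreal"
  have f_meas [measurable]: "?f \<in> borel_measurable channel_space"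
    using assms by measurable
  have "expected_pending_slots i (Suc T) P = (\<integral>\<^sup>+ w. indicator P i + ?f w \<partial>channel_space)"
    unfolding expected_pending_slots_def sum.lessThan_Suc_shift by (simp add: indicator_def)
  also have "\<dots> = indicator P i + (\<integral>\<^sup>+ w. ?f w \<partial>channel_space)"
    by (subst nn_integral_add)
      (simp_all add: prob_space.emeasure_space_1[OF prob_space_channel_space] del: pending_from.simps)
  also have "(\<integral>\<^sup>+ w. ?f w \<partial>channel_space) = (\<integral>\<^sup>+ x. (\<integral>\<^sup>+ w. ?f (cons_slot x w) \<partial>channel_space) \<partial>slot_space)"
    using nn_integral_PiM_cons_slot[OF prob_space_measure_pmf f_meas[unfolded channel_space_def]]
    unfolding channel_space_def slot_space_def .
  also have "\<dots> = (\<integral>\<^sup>+ x. expected_pending_slots i T (P - slot_succeeders x P) \<partial>slot_space)"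
    by (simp only: expected_pending_slots_def indicator_def mem_Collect_eq pending_from_cons_slot)
  finally show ?thesis .
qed

section \<open>The latency recursion\<close>

lemma double_le_two_power: "2 * m \<le> (2::nat) ^ m"
proof (induction m)
  case (Suc m)
  then show ?case
    by (cases m) auto
qed simp

lemma prob_no_success_nonneg: "0 \<le> prob_no_success m"
proof -
  have "real (2 * m) \<le> real (2 ^ m)"
    using double_le_two_power of_nat_le_iff by blast
  then show ?thesis
    by (simp add: prob_no_success_def field_simps)
qed

lemma prob_no_success_less_1: "m \<noteq> 0 \<Longrightarrow> prob_no_success m < 1"
  by (simp add: prob_no_success_def)

lemma prob_other_success_nonneg: "0 \<le> prob_other_success m"
  by (simp add: prob_other_success_def)

fun mean_pending_slots :: "nat \<Rightarrow> nat \<Rightarrow> real" where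
  "mean_pending_slots 0 m = 0"
| "mean_pending_slots (Suc T) m = 1 + prob_no_success m * mean_pending_slots T m
     + prob_other_success m * mean_pending_slots T (m - 1)"

lemma mean_pending_slots_nonneg: "0 \<le> mean_pending_slots T m"
  by (induction T arbitrary: m) (simp_all add: prob_no_success_nonneg prob_other_success_nonneg)

lemma mean_pending_slots_mono: "mean_pending_slots T m \<le> mean_pending_slots (Suc T) m"
proof (induction T arbitrary: m)
  case (Suc T)
  have "prob_no_success m * mean_pending_slots T m
      \<le> prob_no_success m * mean_pending_slots (Suc T) m"
    using Suc.IH prob_no_success_nonneg by (rule mult_left_mono)
  moreover have "prob_other_success m * mean_pending_slots T (m - 1)
      \<le> prob_other_success m * mean_pending_slots (Suc T) (m - 1)"
    using Suc.IH prob_other_success_nonneg by (rule mult_left_mono)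
  ultimately show ?case
    by (simp only: mean_pending_slots.simps(2)[of T] mean_pending_slots.simps(2)[of "Suc T"])
qed simp

definition mean_latency :: "nat \<Rightarrow> real" where
  "mean_latency m = (if m = 1 then 1 else 2 ^ m / m)"

lemma mean_latency_fixpoint:
  assumes "m \<noteq> 0"
  shows "mean_latency m
    = 1 + prob_no_success m * mean_latency m + prob_other_success m * mean_latency (m - 1)"
proof -
  consider "m = 1" | "m = 2" | "m \<ge> 3"
    using assms by linarith
  then show ?thesis
  proof cases
    case 3
    then obtain k where k: "m = Suc k" "k \<ge> 2"
      by (cases m) auto
    have "prob_no_success m * mean_latency m = 2 ^ m / m - 2"
      using 3 by (simp add: prob_no_success_def mean_latency_def field_simps)
    moreover have "prob_other_success m * mean_latency (m - 1) = 1"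
      using k by (simp add: prob_other_success_def mean_latency_def field_simps)
    moreover have "mean_latency m = 2 ^ m / m"
      using 3 by (simp add: mean_latency_def)
    ultimately show ?thesis
      by linarith
  qed (simp_all add: prob_no_success_def prob_other_success_def mean_latency_def)
qed

lemma mean_pending_slots_le: "m \<noteq> 0 \<Longrightarrow> mean_pending_slots T m \<le> mean_latency m"
proof (induction T arbitrary: m)
  case 0
  then show ?case
    by (simp add: mean_latency_def)
next
  case (Suc T)
  have "prob_no_success m * mean_pending_slots T m \<le> prob_no_success m * mean_latency m"
    using Suc prob_no_success_nonneg by (intro mult_left_mono) auto
  moreover have "prob_other_success m * mean_pending_slots T (m - 1)
      \<le> prob_other_success m * mean_latency (m - 1)"
  proof (cases "m = 1")
    case False
    then show ?thesis
      using Suc prob_other_success_nonneg by (intro mult_left_mono) auto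
  qed (simp add: prob_other_success_def)
  ultimately show ?case
    using mean_latency_fixpoint[OF Suc.prems] by simp
qed

lemma mean_pending_slots_tendsto:
  "m \<noteq> 0 \<Longrightarrow> (\<lambda>T. mean_pending_slots T m) \<longlonglongrightarrow> mean_latency m"
proof (induction m rule: less_induct)
  case (less m)
  let ?a = "prob_no_success m" and ?b = "prob_other_success m"
  have "incseq (\<lambda>T. mean_pending_slots T m)"
    by (rule incseq_SucI) (rule mean_pending_slots_mono)
  then obtain L where L: "(\<lambda>T. mean_pending_slots T m) \<longlonglongrightarrow> L"
    using incseq_convergent mean_pending_slots_le[OF less.prems] by blast
  have "(\<lambda>T. ?b * mean_pending_slots T (m - 1)) \<longlonglongrightarrow> ?b * mean_latency (m - 1)"
  proof (cases "m = 1")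
    case False
    then show ?thesis
      using less by (intro tendsto_mult_left) simp
  qed (simp add: prob_other_success_def)
  then have "(\<lambda>T. mean_pending_slots (Suc T) m) \<longlonglongrightarrow> 1 + ?a * L + ?b * mean_latency (m - 1)"
    using L by (auto intro!: tendsto_intros)
  then have "L = 1 + ?a * L + ?b * mean_latency (m - 1)"
    using LIMSEQ_Suc[OF L] LIMSEQ_unique by blast
  then have "(1 - ?a) * L = (1 - ?a) * mean_latency m"
    using mean_latency_fixpoint[OF less.prems] by (simp add: algebra_simps)
  then have "L = mean_latency m"
    using prob_no_success_less_1[OF less.prems] by simp
  then show ?case
    using L by simp
qed

lemma SUP_mean_pending_slots:
  "m \<noteq> 0 \<Longrightarrow> (SUP T. ennreal (mean_pending_slots T m)) = ennreal (mean_latency m)"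
  using LIMSEQ_SUP[of "\<lambda>T. ennreal (mean_pending_slots T m)"]
    tendsto_ennrealI[OF mean_pending_slots_tendsto] LIMSEQ_unique
  by (metis ennreal_leI incseq_SucI mean_pending_slots_mono)

lemma expected_pending_slots_eq:
  "finite P \<Longrightarrow> expected_pending_slots i T P = (if i \<in> P then ennreal (mean_pending_slots T (card P)) else 0)"
proof (induction T arbitrary: P)
  case 0
  then show ?case
    by (simp add: expected_pending_slots_def)
next
  case (Suc T)
  have "expected_pending_slots i (Suc T) P = indicator P i
      + (\<integral>\<^sup>+ x. (if i \<in> P - slot_succeeders x P
           then ennreal (mean_pending_slots T (card (P - slot_succeeders x P))) else 0) \<partial>slot_space)"
    using Suc by (simp add: expected_pending_slots_Suc)
  also have "\<dots> = (if i \<in> P then ennreal (mean_pending_slots (Suc T) (card P)) else 0)"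
  proof (cases "i \<in> P")
    case True
    then show ?thesis
      using nn_integral_slot_transition[OF Suc.prems True, of "\<lambda>m. ennreal (mean_pending_slots T m)"]
        prob_no_success_nonneg prob_other_success_nonneg mean_pending_slots_nonneg
      by (simp add: ennreal_mult ennreal_plus)
  qed simp
  finally show ?case .
qed

lemma latency_eq_suminf:
  "latency n i w = (\<Sum>t. indicator {w. i \<in> pending_from w {0..<n} t} w)"
proof (cases "\<exists>t. i \<notin> pending_from w {0..<n} t")
  case True
  define t0 where "t0 = (LEAST t. i \<notin> pending_from w {0..<n} t)"
  have pending: "i \<in> pending_from w {0..<n} t \<longleftrightarrow> t < t0" for t
    using pending_from_antimono[of t0 t w "{0..<n}"] LeastI_ex[OF True] not_less_Least[of t]
    unfolding t0_def by (metis not_less subsetD)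
  have "(\<Sum>t. indicator {w. i \<in> pending_from w {0..<n} t} w :: ennreal) = (\<Sum>t<t0. 1)"
    by (subst suminf_finite[of "{..<t0}"]) (auto simp: pending indicator_def)
  then show ?thesis
    using True by (simp add: latency_def pending_eq_pending_from t0_def)
next
  case False
  then have "(\<Sum>t. indicator {w. i \<in> pending_from w {0..<n} t} w :: ennreal) = (\<Sum>t. 1)"
    by (simp add: indicator_def)
  also have "\<dots> = \<infinity>"
    by (simp add: suminf_eq_SUP ennreal_SUP_of_nat_eq_top)
  finally show ?thesis
    using False by (simp add: latency_def pending_eq_pending_from)
qed

lemma nn_integral_latency:
  "(\<integral>\<^sup>+ w. latency n i w \<partial>channel_space) = (SUP T. expected_pending_slots i T {0..<n})"
proof -
  have "(\<integral>\<^sup>+ w. latency n i w \<partial>channel_space)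
      = (\<Sum>t. \<integral>\<^sup>+ w. indicator {w. i \<in> pending_from w {0..<n} t} w \<partial>channel_space)"
    by (simp add: latency_eq_suminf nn_integral_suminf)
  also have "\<dots> = (SUP T. expected_pending_slots i T {0..<n})"
    by (simp add: suminf_eq_SUP expected_pending_slots_def nn_integral_sum)
  finally show ?thesis .
qed

theorem lemma3:
  fixes n i :: nat
  assumes "n \<ge> 2" and "i < n"
  shows "(\<integral>\<^sup>+ w. latency n i w \<partial>channel_space) = ennreal (2 ^ n / real n)"
proof -
  have "(\<integral>\<^sup>+ w. latency n i w \<partial>channel_space) = (SUP T. ennreal (mean_pending_slots T n))"
    using assms(2) by (simp add: nn_integral_latency expected_pending_slots_eq)
  also have "\<dots> = ennreal (mean_latency n)"
    using assms(1) by (simp add: SUP_mean_pending_slots)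
  finally show ?thesis
    using assms(1) by (simp add: mean_latency_def)
qed

end
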